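(* Let $(M,\theta)$ be a strictly pseudoconvex CR manifold and let $f=(F_1,\dots,F_m,\alpha):M\to\mathbb H^m\simeq\mathbb C^m\times\mathbb R$ be a $C^2$ map such that $df(H(M))\subset H(\mathbb H^m)$. Write $\varphi_j=\mathrm{Re}\,F_j$, $\psi_j=\mathrm{Im}\,F_j$. Then $$H_b(f)=\sum_{j=1}^m\big(\Delta_b\varphi_j\,X_j+\Delta_b\psi_j\,Y_j\big).$$ In particular $H_b(f)$ is horizontal and $|H_b(f)|^2_{\mathbb H^m}=4\sum_{j=1}^m\big((\Delta_b\varphi_j)^2+(\Delta_b\psi_j)^2\big)$.
   Context: Strictly pseudoconvex CR manifold $(M,\theta)$ of CR dimension $n$: orientable $(2n+1)$-manifold with rank-$2n$ subbundle $H(M)$ carrying an integrable complex structure $J$, and a 1-form $\theta$ with $\ker\theta=H(M)$ and positive definite Levi form $G_\theta(X,Y)=-d\theta(JX,Y)$ on $H(M)$. Reeb field $\xi$: $\theta(\xi)=1$, $\xi\rfloor d\theta=0$. Tanaka–Webster connection $\nabla$: unique affine connection with $\nabla\theta=0,\nabla d\theta=0,\nabla J=0$, torsion $T_\nabla(X,Y)=-\theta([X,Y])\xi$, $T_\nabla(\xi,JX)=-JT_\nabla(\xi,X)\in H(M)$ for $X,Y\in H(M)$. Sub-Laplacian $\Delta_bu=\sum_{i=1}^{2n}(X_i(X_iu)-(\nabla_{X_i}X_i)u)$ for a local $G_\theta$-orthonormal frame $(X_i)$ of $H(M)$. Heisenberg group $\mathbb H^m=\mathbb C^m\times\mathbb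 R$ with law $(z,t)(w,s)=(z+w,t+s+2\mathrm{Im}\sum z^j\bar w^j)$; left-invariant fields $X_j=\partial_{x_j}+2y_j\partial_t$, $Y_j=\partial_{y_j}-2x_j\partial_t$, $T=\partial_t$; $H(\mathbb H^m)=\mathrm{span}\{X_j,Y_j\}$; $g_{\mathbb H^m}$ is the Riemannian metric with $X_j,Y_j,T$ orthogonal, $|X_j|^2=|Y_j|^2=4$, $|T|=1$. The Levi tension of $f:M\to(\mathbb H^m,g_{\mathbb H^m})$ is $H_b(f)=\sum_i\big(\nabla^f_{X_i}df(X_i)-df(\nabla_{X_i}X_i)\big)$, $\nabla^f$ the pullback of the Levi-Civita connection of $g_{\mathbb H^m}$. *)

theory Defs
  imports "HOL-Analysis.Analysis"
begin

fun Ck :: "nat \<Rightarrow> 'a::euclidean_space set \<Rightarrow> ('a \<Rightarrow> 'b::real_normed_vector) \<Rightarrow> bool" where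
  "Ck 0 U f = continuous_on U f"
| "Ck (Suc k) U f = (f differentiable_on U \<and>
      (\<forall>v. Ck k U (\<lambda>x. frechet_derivative f (at x) v)))"

definition smooth_on :: "'a::euclidean_space set \<Rightarrow> ('a \<Rightarrow> 'b::real_normed_vector) \<Rightarrow> bool" where
  "smooth_on U f = (\<forall>k. Ck k U f)"

definition bracket :: "('a::euclidean_space \<Rightarrow> 'a) \<Rightarrow> ('a \<Rightarrow> 'a) \<Rightarrow> 'a \<Rightarrow> 'a" where
  "bracket X Y x = frechet_derivative Y (at x) (X x) - frechet_derivative X (at x) (Y x)"

definition cov :: "('a::euclidean_space \<Rightarrow> 'a \<Rightarrow> 'a \<Rightarrow> 'a) \<Rightarrow> ('a \<Rightarrow> 'a) \<Rightarrow> ('a \<Rightarrow> 'a) \<Rightarrow> 'a \<Rightarrow> 'a" where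
  "cov Gam X Y x = frechet_derivative Y (at x) (X x) + Gam x (X x) (Y x)"

definition torsion :: "('a::euclidean_space \<Rightarrow> 'a \<Rightarrow> 'a \<Rightarrow> 'a) \<Rightarrow> ('a \<Rightarrow> 'a) \<Rightarrow> ('a \<Rightarrow> 'a) \<Rightarrow> 'a \<Rightarrow> 'a" where
  "torsion Gam X Y x = cov Gam X Y x - cov Gam Y X x - bracket X Y x"

text \<open>Exterior derivative of a 1-form th (th x is the covector at x), evaluated on
  tangent vectors v w at x; convention d th(X,Y) = X(th Y) - Y(th X) - th([X,Y]).\<close>
definition dform :: "('a::euclidean_space \<Rightarrow> 'a \<Rightarrow> real) \<Rightarrow> 'a \<Rightarrow> 'a \<Rightarrow> 'a \<Rightarrow> real" where
  "dform th x v w = frechet_derivative (\<lambda>q. th q w) (at x) v - frechet_derivative (\<lambda>q. th q v) (at x) w"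

definition horiz :: "('a::euclidean_space \<Rightarrow> 'a \<Rightarrow> real) \<Rightarrow> 'a \<Rightarrow> 'a set" where
  "horiz th x = {v. th x v = 0}"

definition levi_form :: "('a::euclidean_space \<Rightarrow> 'a \<Rightarrow> real) \<Rightarrow> ('a \<Rightarrow> 'a \<Rightarrow> 'a) \<Rightarrow> 'a \<Rightarrow> 'a \<Rightarrow> 'a \<Rightarrow> real" where
  "levi_form th J x v w = - dform th x (J x v) w"

definition vfields :: "'a::euclidean_space set \<Rightarrow> ('a \<Rightarrow> 'a) set" where
  "vfields U = {X. smooth_on U X}"

definition hfields :: "'a::euclidean_space set \<Rightarrow> ('a \<Rightarrow> 'a \<Rightarrow> real) \<Rightarrow> ('a \<Rightarrow> 'a) set" where
  "hfields U th = {X. smooth_on U X \<and> (\<forall>x\<in>U. X x \<in> horiz th x)}"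

section \<open>Strictly pseudoconvex CR structure (local model on an open U, dim 2n+1)\<close>

text \<open>J is the complex structure on H, extended to TM by J xi = 0 (standard convention,
  needed to state nabla J = 0); xi is the Reeb field.\<close>
definition spc_CR ::
  "'a::euclidean_space set \<Rightarrow> nat \<Rightarrow> ('a \<Rightarrow> 'a \<Rightarrow> real) \<Rightarrow> ('a \<Rightarrow> 'a \<Rightarrow> 'a) \<Rightarrow> ('a \<Rightarrow> 'a) \<Rightarrow> bool" where
  "spc_CR U n th J xi \<longleftrightarrow>
     open U \<and> DIM('a) = 2 * n + 1 \<and>
     (\<forall>x\<in>U. linear (th x) \<and> th x \<noteq> (\<lambda>v. 0)) \<and>
     (\<forall>v. smooth_on U (\<lambda>x. th x v)) \<and>
     (\<forall>x\<in>U. linear (J x) \<and> J x (xi x) = 0 \<and>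
        (\<forall>v\<in>horiz th x. J x v \<in> horiz th x \<and> J x (J x v) = - v)) \<and>
     (\<forall>v. smooth_on U (\<lambda>x. J x v)) \<and>
     (\<forall>X\<in>hfields U th. \<forall>Y\<in>hfields U th. \<forall>x\<in>U.
        let JX = (\<lambda>q. J q (X q)); JY = (\<lambda>q. J q (Y q)) in
        bracket JX Y x + bracket X JY x \<in> horiz th x \<and>
        bracket JX JY x - bracket X Y x - J x (bracket X JY x) - J x (bracket JX Y x) = 0) \<and>
     (\<forall>x\<in>U. \<forall>v\<in>horiz th x. v \<noteq> 0 \<longrightarrow> levi_form th J x v v > 0) \<and>
     smooth_on U xi \<and>
     (\<forall>x\<in>U. th x (xi x) = 1 \<and> (\<forall>w. dform th x (xi x) w = 0))"

text \<open>Tanaka-Webster connection (characterised by its defining properties).\<close>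
definition tanaka_webster ::
  "'a::euclidean_space set \<Rightarrow> ('a \<Rightarrow> 'a \<Rightarrow> real) \<Rightarrow> ('a \<Rightarrow> 'a \<Rightarrow> 'a) \<Rightarrow> ('a \<Rightarrow> 'a)
    \<Rightarrow> ('a \<Rightarrow> 'a \<Rightarrow> 'a \<Rightarrow> 'a) \<Rightarrow> bool" where
  "tanaka_webster U th J xi Gam \<longleftrightarrow>
     (\<forall>x\<in>U. \<forall>v. linear (Gam x v) \<and> linear (\<lambda>u. Gam x u v)) \<and>
     (\<forall>u v. smooth_on U (\<lambda>x. Gam x u v)) \<and>
     (\<forall>X\<in>vfields U. \<forall>Y\<in>vfields U. \<forall>x\<in>U.
        frechet_derivative (\<lambda>q. th q (Y q)) (at x) (X x) = th x (cov Gam X Y x) \<and>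
        (\<forall>Z\<in>vfields U. frechet_derivative (\<lambda>q. dform th q (Y q) (Z q)) (at x) (X x)
            = dform th x (cov Gam X Y x) (Z x) + dform th x (Y x) (cov Gam X Z x)) \<and>
        cov Gam X (\<lambda>q. J q (Y q)) x = J x (cov Gam X Y x)) \<and>
     (\<forall>X\<in>hfields U th. \<forall>Y\<in>hfields U th. \<forall>x\<in>U.
        torsion Gam X Y x = - (th x (bracket X Y x)) *\<^sub>R xi x) \<and>
     (\<forall>X\<in>hfields U th. \<forall>x\<in>U.
        torsion Gam xi (\<lambda>q. J q (X q)) x = - J x (torsion Gam xi X x) \<and>
        torsion Gam xi X x \<in> horiz th x)"

definition ortho_frame ::
  "'a::euclidean_space set \<Rightarrow> nat \<Rightarrow> ('a \<Rightarrow> 'a \<Rightarrow> real) \<Rightarrow> ('a \<Rightarrow> 'a \<Rightarrow> 'a) \<Rightarrow> (nat \<Rightarrow> 'a \<Rightarrow> 'a) \<Rightarrow> bool" where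
  "ortho_frame U n th J X \<longleftrightarrow>
     (\<forall>i<2*n. X i \<in> hfields U th) \<and>
     (\<forall>x\<in>U. \<forall>i<2*n. \<forall>j<2*n. levi_form th J x (X i x) (X j x) = (if i = j then 1 else 0))"

definition sublap ::
  "nat \<Rightarrow> ('a::euclidean_space \<Rightarrow> 'a \<Rightarrow> 'a \<Rightarrow> 'a) \<Rightarrow> (nat \<Rightarrow> 'a \<Rightarrow> 'a) \<Rightarrow> ('a \<Rightarrow> real) \<Rightarrow> 'a \<Rightarrow> real" where
  "sublap n Gam X u x =
     (\<Sum>i<2*n. frechet_derivative (\<lambda>q. frechet_derivative u (at q) (X i q)) (at x) (X i x)
               - frechet_derivative u (at x) (cov Gam (X i) (X i) x))"

section \<open>The Heisenberg group H^m = C^m x R (m = CARD('m))\<close>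

definition heisX :: "'m::finite \<Rightarrow> ((complex^'m) \<times> real) \<Rightarrow> ((complex^'m) \<times> real)" where
  "heisX j p = (axis j 1, 2 * Im (fst p $ j))"

definition heisY :: "'m::finite \<Rightarrow> ((complex^'m) \<times> real) \<Rightarrow> ((complex^'m) \<times> real)" where
  "heisY j p = (axis j \<i>, - 2 * Re (fst p $ j))"

definition heisT :: "(complex^'m::finite) \<times> real" where
  "heisT = (0, 1)"

definition heisH :: "((complex^'m::finite) \<times> real) \<Rightarrow> ((complex^'m) \<times> real) set" where
  "heisH p = span (range (\<lambda>j. heisX j p) \<union> range (\<lambda>j. heisY j p))"

text \<open>The Riemannian metric g_{H^m}: X_j, Y_j, T orthogonal, |X_j|^2=|Y_j|^2=4, |T|=1.
  For v = sum a_j X_j + b_j Y_j + c T one has a_j = Re v_j, b_j = Im v_j and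
  c = v_t - sum_j 2 (y_j a_j - x_j b_j).\<close>
definition heis_vcomp :: "((complex^'m::finite) \<times> real) \<Rightarrow> ((complex^'m) \<times> real) \<Rightarrow> real" where
  "heis_vcomp p v = snd v - (\<Sum>j\<in>UNIV. 2 * (Im (fst p $ j) * Re (fst v $ j) - Re (fst p $ j) * Im (fst v $ j)))"

definition heis_g :: "((complex^'m::finite) \<times> real) \<Rightarrow> ((complex^'m) \<times> real) \<Rightarrow> ((complex^'m) \<times> real) \<Rightarrow> real" where
  "heis_g p v w = (\<Sum>j\<in>UNIV. 4 * (Re (fst v $ j) * Re (fst w $ j) + Im (fst v $ j) * Im (fst w $ j)))
                  + heis_vcomp p v * heis_vcomp p w"

text \<open>Christoffel tensor (in global coordinates) of the Levi-Civita connection of a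
  Riemannian metric g, via the Koszul formula on coordinate fields.\<close>
definition LC_Gamma :: "('b::euclidean_space \<Rightarrow> 'b \<Rightarrow> 'b \<Rightarrow> real) \<Rightarrow> 'b \<Rightarrow> 'b \<Rightarrow> 'b \<Rightarrow> 'b" where
  "LC_Gamma g p v w = (THE u. \<forall>z. 2 * g p u z =
       frechet_derivative (\<lambda>q. g q w z) (at p) v + frechet_derivative (\<lambda>q. g q v z) (at p) w
     - frechet_derivative (\<lambda>q. g q v w) (at p) z)"

text \<open>Levi tension H_b(f) = sum_i (nabla^f_{X_i} df(X_i) - df(nabla_{X_i} X_i)),
  nabla^f the pullback of the Levi-Civita connection of g_{H^m}.\<close>
definition levi_tension ::
  "nat \<Rightarrow> ('a::euclidean_space \<Rightarrow> 'a \<Rightarrow> 'a \<Rightarrow> 'a) \<Rightarrow> (nat \<Rightarrow> 'a \<Rightarrow> 'a)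
     \<Rightarrow> ('a \<Rightarrow> (complex^'m::finite) \<times> real) \<Rightarrow> 'a \<Rightarrow> (complex^'m) \<times> real" where
  "levi_tension n Gam X f x =
     (\<Sum>i<2*n. frechet_derivative (\<lambda>q. frechet_derivative f (at q) (X i q)) (at x) (X i x)
               + LC_Gamma heis_g (f x) (frechet_derivative f (at x) (X i x)) (frechet_derivative f (at x) (X i x))
               - frechet_derivative f (at x) (cov Gam (X i) (X i) x))"

end

theory Submission
  imports Defs
begin

text \<open>
  On \<open>\<HH>\<^sup>m\<close> the \<open>T\<close>-coefficient of a vector \<open>w\<close> at \<open>p\<close> is
  \<open>c\<^sub>p(w) = w\<^sub>t - \<omega>(p, w)\<close> with the symplectic form \<open>\<omega>\<close>, and \<open>H(\<HH>\<^sup>m)\<close> is its kernel.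
  If \<open>df\<close> maps \<open>H(M)\<close> into \<open>H(\<HH>\<^sup>m)\<close>, then \<open>c\<^sub>f(df X) = 0\<close> for horizontal \<open>X\<close>;
  differentiating this along \<open>X\<close> shows that \<open>X(X f)\<close> is horizontal as well, the
  extra term being \<open>\<omega>(df X, df X) = 0\<close>. Since \<open>\<nabla>\<theta> = 0\<close>, \<open>\<nabla>\<^sub>X X\<close> is horizontal,
  and by the Koszul formula the Christoffel term \<open>\<Gamma>(df X, df X)\<close> vanishes for
  horizontal \<open>df X\<close>. Hence \<open>H\<^sub>b(f)\<close> is the componentwise sub-Laplacian of \<open>f\<close>,
  a horizontal vector whose \<open>X\<^sub>j\<close>, \<open>Y\<^sub>j\<close> coefficients are the sub-Laplacians of
  \<open>Re F\<^sub>j\<close>, \<open>Im F\<^sub>j\<close>.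
\<close>

definition heis_omega :: "((complex^'m::finite) \<times> real) \<Rightarrow> ((complex^'m) \<times> real) \<Rightarrow> real" where
  "heis_omega v w = (\<Sum>j\<in>UNIV. 2 * (Im (fst v $ j) * Re (fst w $ j) - Re (fst v $ j) * Im (fst w $ j)))"

lemma heis_omega_self [simp]: "heis_omega v v = 0"
  by (simp add: heis_omega_def)

lemma bounded_bilinear_heis_omega: "bounded_bilinear heis_omega"
proof -
  have "bilinear heis_omega"
    unfolding bilinear_def
    by (auto intro!: linearI simp: heis_omega_def sum.distrib[symmetric] sum_distrib_left algebra_simps)
  then show ?thesis by (rule bilinear_conv_bounded_bilinear[THEN iffD1])
qed

lemma heis_vcomp_eq: "heis_vcomp p w = snd w - heis_omega p w"
  by (simp add: heis_vcomp_def heis_omega_def)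

lemma linear_heis_vcomp: "linear (heis_vcomp p)"
  using bounded_bilinear.bounded_linear_right[OF bounded_bilinear_heis_omega]
  unfolding heis_vcomp_eq
  by (intro linear_compose_sub linear_snd bounded_linear.linear)

lemma has_derivative_heis_vcomp:
  assumes "(F has_derivative F') (at x)" and "(G has_derivative G') (at x)"
  shows "((\<lambda>q. heis_vcomp (F q) (G q)) has_derivative
           (\<lambda>h. heis_vcomp (F x) (G' h) - heis_omega (F' h) (G x))) (at x)"
  unfolding heis_vcomp_eq
  by (rule derivative_eq_intros bounded_bilinear.FDERIV[OF bounded_bilinear_heis_omega] assms refl)+
    (simp add: algebra_simps)

lemma heis_vcomp_heisX [simp]: "heis_vcomp p (heisX j p) = 0"
proof -
  have "heis_omega p (heisX j p) = (\<Sum>k\<in>UNIV. if k = j then 2 * Im (fst p $ j) else 0)"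
    unfolding heis_omega_def by (rule sum.cong) (auto simp: heisX_def axis_def)
  then show ?thesis by (simp add: heis_vcomp_eq heisX_def)
qed

lemma heis_vcomp_heisY [simp]: "heis_vcomp p (heisY j p) = 0"
proof -
  have "heis_omega p (heisY j p) = (\<Sum>k\<in>UNIV. if k = j then - 2 * Re (fst p $ j) else 0)"
    unfolding heis_omega_def by (rule sum.cong) (auto simp: heisY_def axis_def)
  then show ?thesis by (simp add: heis_vcomp_eq heisY_def)
qed

lemma heis_horizontal_expansion:
  assumes "heis_vcomp p w = 0"
  shows "w = (\<Sum>j\<in>UNIV. Re (fst w $ j) *\<^sub>R heisX j p + Im (fst w $ j) *\<^sub>R heisY j p)"
    (is "w = ?s")
proof (rule prod_eqI)
  have "fst ?s $ k = fst w $ k" for k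
  proof -
    have "fst ?s $ k = (\<Sum>j\<in>UNIV. if j = k then fst w $ k else 0)"
      unfolding fst_sum sum_component
      by (rule sum.cong) (auto simp: heisX_def heisY_def axis_def complex_eq_iff)
    then show ?thesis by simp
  qed
  then show "fst w = fst ?s" by (simp add: vec_eq_iff)
  have "snd ?s = heis_omega p w"
    unfolding snd_sum heis_omega_def
    by (rule sum.cong) (auto simp: heisX_def heisY_def algebra_simps)
  then show "snd w = snd ?s" using assms by (simp add: heis_vcomp_eq)
qed

lemma heisH_iff_heis_vcomp: "v \<in> heisH p \<longleftrightarrow> heis_vcomp p v = 0"
proof
  have "heisH p \<subseteq> {v. heis_vcomp p v = 0}"
    unfolding heisH_def
    by (rule span_minimal) (auto intro: real_vector.linear_subspace_kernel[OF linear_heis_vcomp])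
  then show "v \<in> heisH p \<Longrightarrow> heis_vcomp p v = 0" by blast
  show "heis_vcomp p v = 0 \<Longrightarrow> v \<in> heisH p"
    unfolding heisH_def
    by (subst heis_horizontal_expansion)
      (assumption, intro span_sum span_add span_scale span_base, auto)
qed

lemma heis_g_eq_inner: "heis_g p v w = 4 * (fst v \<bullet> fst w) + heis_vcomp p v * heis_vcomp p w"
  by (simp add: heis_g_def inner_vec_def inner_complex_def sum_distrib_left)

lemma heis_g_self_eq_0_iff [simp]: "heis_g p u u = 0 \<longleftrightarrow> u = 0"
proof
  assume "heis_g p u u = 0"
  then have "4 * (fst u \<bullet> fst u) + (heis_vcomp p u)\<^sup>2 = 0"
    by (simp add: heis_g_eq_inner power2_eq_square)
  then have "fst u \<bullet> fst u = 0 \<and> (heis_vcomp p u)\<^sup>2 = 0"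
    using inner_ge_zero[of "fst u"] zero_le_power2[of "heis_vcomp p u"] by linarith
  then show "u = 0" by (simp add: heis_vcomp_eq heis_omega_def prod_eq_iff)
qed (simp add: heis_g_def heis_vcomp_def)

lemma has_derivative_heis_g:
  "((\<lambda>q. heis_g q v w) has_derivative
     (\<lambda>h. - heis_vcomp p v * heis_omega h w - heis_vcomp p w * heis_omega h v)) (at p)"
  unfolding heis_g_eq_inner
  by (rule derivative_eq_intros has_derivative_heis_vcomp has_derivative_ident refl)+
    (simp add: linear_0[OF linear_heis_vcomp] algebra_simps)

text \<open>Each term of the Koszul formula carries a factor \<open>c\<^sub>p(v)\<close> or \<open>\<omega>(v, v)\<close>.\<close>

lemma LC_Gamma_heis_g_horizontal:
  assumes "heis_vcomp p v = 0"
  shows "LC_Gamma heis_g p v v = 0"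
proof -
  have D: "frechet_derivative (\<lambda>q. heis_g q w z) (at p) h
         = - heis_vcomp p w * heis_omega h z - heis_vcomp p z * heis_omega h w" for w z h
    by (simp add: frechet_derivative_at[OF has_derivative_heis_g, symmetric])
  have koszul_rhs: "frechet_derivative (\<lambda>q. heis_g q v z) (at p) v
      + frechet_derivative (\<lambda>q. heis_g q v z) (at p) v
      - frechet_derivative (\<lambda>q. heis_g q v v) (at p) z = 0" for z
    by (simp add: D assms)
  have g0: "heis_g p 0 z = 0" for z
    by (simp add: heis_g_eq_inner linear_0[OF linear_heis_vcomp])
  show ?thesis
    unfolding LC_Gamma_def
  proof (rule the_equality)
    show "\<forall>z. 2 * heis_g p 0 z = frechet_derivative (\<lambda>q. heis_g q v z) (at p) v
      + frechet_derivative (\<lambda>q. heis_g q v z) (at p) v - frechet_derivative (\<lambda>q. heis_g q v v) (at p) z"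
      by (simp only: g0 koszul_rhs) simp
    fix u
    assume "\<forall>z. 2 * heis_g p u z = frechet_derivative (\<lambda>q. heis_g q v z) (at p) v
      + frechet_derivative (\<lambda>q. heis_g q v z) (at p) v - frechet_derivative (\<lambda>q. heis_g q v v) (at p) z"
    then have "2 * heis_g p u u = 0" by (simp only: koszul_rhs)
    then show "u = 0" by simp
  qed
qed

lemma frechet_derivative_bounded_linear_compose:
  assumes "bounded_linear L" and "f differentiable at x"
  shows "frechet_derivative (\<lambda>q. L (f q)) (at x) v = L (frechet_derivative f (at x) v)"
  using bounded_linear.has_derivative[OF assms(1) frechet_derivative_works[THEN iffD1, OF assms(2)]]
  by (simp add: frechet_derivative_at[symmetric])

lemma linear_euclidean_expansion:
  assumes "linear L" shows "L v = (\<Sum>b\<in>Basis. (v \<bullet> b) *\<^sub>R L b)"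
  by (metis (no_types, lifting) assms euclidean_representation linear_scale linear_sum sum.cong)

context
  fixes U :: "'a::euclidean_space set" and f :: "'a \<Rightarrow> 'b::real_normed_vector" and Y :: "'a \<Rightarrow> 'a"
  assumes U: "open U"
    and f: "f differentiable_on U"
    and df: "\<And>v. (\<lambda>q. frechet_derivative f (at q) v) differentiable_on U"
    and Y: "Y differentiable_on U"
begin

lemma differentiable_at_frechet_derivative_along:
  assumes "x \<in> U"
  shows "(\<lambda>q. frechet_derivative f (at q) (Y q)) differentiable at x"
proof -
  have "Y differentiable at x" and "(\<lambda>q. frechet_derivative f (at q) b) differentiable at x" for b
    using U assms Y df differentiable_on_eq_differentiable_at by blast+
  then have "(\<lambda>q. \<Sum>b\<in>Basis. (Y q \<bullet> b) *\<^sub>R frechet_derivative f (at q) b) differentiable at x"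
    by (simp add: differentiable_sum differentiable_scaleR differentiable_inner)
  moreover have "(\<Sum>b\<in>Basis. (Y q \<bullet> b) *\<^sub>R frechet_derivative f (at q) b) = frechet_derivative f (at q) (Y q)"
    if "q \<in> U" for q
    using that U f differentiable_on_eq_differentiable_at
    by (metis linear_euclidean_expansion linear_frechet_derivative)
  ultimately show ?thesis
    unfolding differentiable_def using U assms by (meson has_derivative_transform_within_open)
qed

lemma frechet_derivative_along_bounded_linear:
  assumes L: "bounded_linear L" and x: "x \<in> U"
  shows "frechet_derivative (\<lambda>q. frechet_derivative (\<lambda>q. L (f q)) (at q) (Y q)) (at x) v
       = L (frechet_derivative (\<lambda>q. frechet_derivative f (at q) (Y q)) (at x) v)"
proof -
  let ?G = "\<lambda>q. frechet_derivative f (at q) (Y q)"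
  have LG: "((\<lambda>q. L (?G q)) has_derivative (\<lambda>v. L (frechet_derivative ?G (at x) v))) (at x)"
    using bounded_linear.has_derivative[OF L]
      frechet_derivative_works[THEN iffD1, OF differentiable_at_frechet_derivative_along[OF x]] .
  have agree: "L (?G q) = frechet_derivative (\<lambda>q. L (f q)) (at q) (Y q)" if "q \<in> U" for q
    using frechet_derivative_bounded_linear_compose[OF L] that U f differentiable_on_eq_differentiable_at
    by metis
  have "((\<lambda>q. frechet_derivative (\<lambda>q. L (f q)) (at q) (Y q)) has_derivative
      (\<lambda>v. L (frechet_derivative ?G (at x) v))) (at x)"
    by (rule has_derivative_transform_within_open[OF LG U x agree])
  then show ?thesis by (simp add: frechet_derivative_at[symmetric])
qed

end

text \<open>The correction term from differentiating the base point is \<open>\<omega>(df Y, df Y) = 0\<close>.\<close>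

lemma heis_vcomp_second_derivative_along:
  fixes f :: "'a::euclidean_space \<Rightarrow> (complex^'m::finite) \<times> real"
  assumes U: "open U" and x: "x \<in> U"
    and f: "f differentiable_on U"
    and df: "\<And>v. (\<lambda>q. frechet_derivative f (at q) v) differentiable_on U"
    and Y: "Y differentiable_on U"
    and horizontal: "\<And>q. q \<in> U \<Longrightarrow> heis_vcomp (f q) (frechet_derivative f (at q) (Y q)) = 0"
  shows "heis_vcomp (f x) (frechet_derivative (\<lambda>q. frechet_derivative f (at q) (Y q)) (at x) (Y x)) = 0"
proof -
  let ?G = "\<lambda>q. frechet_derivative f (at q) (Y q)"
  have "f differentiable at x"
    using U x f differentiable_on_eq_differentiable_at by blast
  moreover have "?G differentiable at x"
    by (rule differentiable_at_frechet_derivative_along[OF U f df Y x])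
  ultimately have "((\<lambda>q. heis_vcomp (f q) (?G q)) has_derivative
      (\<lambda>h. heis_vcomp (f x) (frechet_derivative ?G (at x) h) - heis_omega (frechet_derivative f (at x) h) (?G x)))
      (at x)"
    by (intro has_derivative_heis_vcomp frechet_derivative_works[THEN iffD1])
  moreover have "((\<lambda>q. heis_vcomp (f q) (?G q)) has_derivative (\<lambda>h. 0)) (at x)"
    by (rule has_derivative_transform_within_open[OF has_derivative_const U x]) (simp add: horizontal)
  ultimately have "(\<lambda>h. heis_vcomp (f x) (frechet_derivative ?G (at x) h)
      - heis_omega (frechet_derivative f (at x) h) (?G x)) = (\<lambda>h. 0)"
    by (rule has_derivative_unique)
  from fun_cong[OF this, of "Y x"] show ?thesis by simp
qed

lemma smooth_on_imp_differentiable_on: "smooth_on U f \<Longrightarrow> f differentiable_on U"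
  unfolding smooth_on_def by (metis Ck.simps(2))

lemma tanaka_webster_cov_horizontal:
  assumes TW: "tanaka_webster U th J xi Gam" and U: "open U" and x: "x \<in> U"
    and Y: "Y \<in> vfields U" and Z: "Z \<in> hfields U th"
  shows "cov Gam Y Z x \<in> horiz th x"
proof -
  have "Z \<in> vfields U" and Z0: "\<And>q. q \<in> U \<Longrightarrow> th q (Z q) = 0"
    using Z by (auto simp: hfields_def vfields_def horiz_def)
  then have "frechet_derivative (\<lambda>q. th q (Z q)) (at x) (Y x) = th x (cov Gam Y Z x)"
    using TW Y x unfolding tanaka_webster_def by blast
  moreover have "((\<lambda>q. th q (Z q)) has_derivative (\<lambda>h. 0)) (at x)"
    by (rule has_derivative_transform_within_open[OF has_derivative_const U x]) (simp add: Z0)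
  ultimately show ?thesis
    by (simp add: horiz_def frechet_derivative_at[symmetric])
qed

definition sublap_vec ::
  "nat \<Rightarrow> ('a::euclidean_space \<Rightarrow> 'a \<Rightarrow> 'a \<Rightarrow> 'a) \<Rightarrow> (nat \<Rightarrow> 'a \<Rightarrow> 'a) \<Rightarrow> ('a \<Rightarrow> 'b::real_normed_vector) \<Rightarrow> 'a \<Rightarrow> 'b"
  where
  "sublap_vec n Gam X u x =
     (\<Sum>i<2*n. frechet_derivative (\<lambda>q. frechet_derivative u (at q) (X i q)) (at x) (X i x)
               - frechet_derivative u (at x) (cov Gam (X i) (X i) x))"

lemma sublap_eq_sublap_vec: "sublap n Gam X u x = sublap_vec n Gam X u x"
  by (simp add: sublap_def sublap_vec_def)

lemma sublap_vec_bounded_linear: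
  assumes L: "bounded_linear L" and U: "open U" and x: "x \<in> U"
    and f: "f differentiable_on U"
    and df: "\<And>v. (\<lambda>q. frechet_derivative f (at q) v) differentiable_on U"
    and X: "\<And>i. i < 2 * n \<Longrightarrow> X i differentiable_on U"
  shows "sublap_vec n Gam X (\<lambda>q. L (f q)) x = L (sublap_vec n Gam X f x)"
proof -
  have "f differentiable at x"
    using U x f differentiable_on_eq_differentiable_at by blast
  moreover have "frechet_derivative (\<lambda>q. frechet_derivative (\<lambda>q. L (f q)) (at q) (X i q)) (at x) (X i x)
      = L (frechet_derivative (\<lambda>q. frechet_derivative f (at q) (X i q)) (at x) (X i x))" if "i < 2 * n" for i
    by (rule frechet_derivative_along_bounded_linear[OF U f df X[OF that] L x])
  ultimately show ?thesis
    unfolding sublap_vec_def linear_sum[OF bounded_linear.linear[OF L]]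
      linear_diff[OF bounded_linear.linear[OF L]]
    by (simp add: frechet_derivative_bounded_linear_compose[OF L])
qed

lemma levi_tension_eq_sublap_vec:
  assumes "\<And>i. i < 2 * n \<Longrightarrow> heis_vcomp (f x) (frechet_derivative f (at x) (X i x)) = 0"
  shows "levi_tension n Gam X f x = sublap_vec n Gam X f x"
  unfolding levi_tension_def sublap_vec_def
  by (rule sum.cong) (simp_all add: assms LC_Gamma_heis_g_horizontal)

lemma heis_vcomp_sublap_vec:
  assumes U: "open U" and x: "x \<in> U"
    and f: "f differentiable_on U"
    and df: "\<And>v. (\<lambda>q. frechet_derivative f (at q) v) differentiable_on U"
    and X: "\<And>i. i < 2 * n \<Longrightarrow> X i differentiable_on U"
    and horizontal: "\<And>i q. i < 2 * n \<Longrightarrow> q \<in> U \<Longrightarrow> heis_vcomp (f q) (frechet_derivative f (at q) (X i q)) = 0"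
    and cov_horizontal:
      "\<And>i. i < 2 * n \<Longrightarrow> heis_vcomp (f x) (frechet_derivative f (at x) (cov Gam (X i) (X i) x)) = 0"
  shows "heis_vcomp (f x) (sublap_vec n Gam X f x) = 0"
  unfolding sublap_vec_def linear_sum[OF linear_heis_vcomp] linear_diff[OF linear_heis_vcomp]
  by (simp add: heis_vcomp_second_derivative_along[OF U x f df X horizontal] cov_horizontal)

theorem proposition5p1:
  fixes U :: "'a::euclidean_space set" and n :: nat
    and th :: "'a \<Rightarrow> 'a \<Rightarrow> real" and J :: "'a \<Rightarrow> 'a \<Rightarrow> 'a" and xi :: "'a \<Rightarrow> 'a"
    and Gam :: "'a \<Rightarrow> 'a \<Rightarrow> 'a \<Rightarrow> 'a" and X :: "nat \<Rightarrow> 'a \<Rightarrow> 'a"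
    and f :: "'a \<Rightarrow> (complex^'m::finite) \<times> real"
  assumes "spc_CR U n th J xi"
    and "tanaka_webster U th J xi Gam"
    and "ortho_frame U n th J X"
    and "Ck 2 U f"
    and "\<forall>x\<in>U. \<forall>v\<in>horiz th x. frechet_derivative f (at x) v \<in> heisH (f x)"
    and "x \<in> U"
  shows "levi_tension n Gam X f x =
           (\<Sum>j\<in>UNIV. sublap n Gam X (\<lambda>q. Re (fst (f q) $ j)) x *\<^sub>R heisX j (f x)
                     + sublap n Gam X (\<lambda>q. Im (fst (f q) $ j)) x *\<^sub>R heisY j (f x))
         \<and> levi_tension n Gam X f x \<in> heisH (f x)
         \<and> heis_g (f x) (levi_tension n Gam X f x) (levi_tension n Gam X f x)
             = 4 * (\<Sum>j\<in>UNIV. (sublap n Gam X (\<lambda>q. Re (fst (f q) $ j)) x)\<^sup>2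
                             + (sublap n Gam X (\<lambda>q. Im (fst (f q) $ j)) x)\<^sup>2)"
proof -
  have U: "open U" using assms(1) by (simp add: spc_CR_def)
  have f: "f differentiable_on U"
    and df: "\<And>v. (\<lambda>q. frechet_derivative f (at q) v) differentiable_on U"
    using assms(4) by (simp_all add: numeral_2_eq_2)
  have frame: "X i \<in> hfields U th" if "i < 2 * n" for i
    using assms(3) that by (simp add: ortho_frame_def)
  then have X: "X i differentiable_on U" if "i < 2 * n" for i
    using that by (simp add: hfields_def smooth_on_imp_differentiable_on)
  have horizontal: "heis_vcomp (f q) (frechet_derivative f (at q) v) = 0"
    if "q \<in> U" "v \<in> horiz th q" for q v
    using assms(5) that by (simp add: heisH_iff_heis_vcomp)
  have "cov Gam (X i) (X i) x \<in> horiz th x" if "i < 2 * n" for i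
    using frame[OF that]
    by (intro tanaka_webster_cov_horizontal[OF assms(2) U assms(6)]) (auto simp: hfields_def vfields_def)
  moreover have "X i q \<in> horiz th q" if "i < 2 * n" "q \<in> U" for i q
    using frame that by (simp add: hfields_def)
  ultimately have tension: "levi_tension n Gam X f x = sublap_vec n Gam X f x"
    and vcomp: "heis_vcomp (f x) (sublap_vec n Gam X f x) = 0"
    using assms(6) horizontal
    by (auto intro!: levi_tension_eq_sublap_vec heis_vcomp_sublap_vec[OF U assms(6) f df X])
  have "sublap n Gam X (\<lambda>q. L (f q)) x = L (sublap_vec n Gam X f x)" if "bounded_linear L" for L
    unfolding sublap_eq_sublap_vec by (rule sublap_vec_bounded_linear[OF that U assms(6) f df X])
  moreover have "bounded_linear (\<lambda>p. Re (fst p $ j))" and "bounded_linear (\<lambda>p. Im (fst p $ j))" for j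
    by (intro bounded_linear_compose[OF bounded_linear_Re] bounded_linear_compose[OF bounded_linear_Im]
        bounded_linear_compose[OF bounded_linear_vec_nth] bounded_linear_fst)+
  ultimately have "sublap n Gam X (\<lambda>q. Re (fst (f q) $ j)) x = Re (fst (sublap_vec n Gam X f x) $ j)"
    and "sublap n Gam X (\<lambda>q. Im (fst (f q) $ j)) x = Im (fst (sublap_vec n Gam X f x) $ j)" for j
    by blast+
  then show ?thesis
    using heis_horizontal_expansion[OF vcomp] vcomp
    by (simp add: tension heisH_iff_heis_vcomp heis_g_eq_inner inner_vec_def inner_complex_def
        power2_eq_square)
qed

end
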